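(* Let $k$ be a positive integer and $n\ge3$, and let $C_n+K_1$ be the wheel graph. Then (i) $O_{R,k}(C_3+K_1)=O_R(C_3+K_1)=\mathcal{B}$; (ii) if $n\in\{4,5,6,7\}$ or $n\ge8$ is even, then $O_{R,k}(C_n+K_1)=O_R(C_n+K_1)=\mathcal{M}$; (iii) if $n\ge9$ is odd, then $O_{R,k}(C_n+K_1)=O_R(C_n+K_1)\in\{\mathcal{M},\mathcal{N}\}$ (Maker has a winning strategy in the game where he moves first).
   Context: $C_n+K_1$ is the join of the cycle $C_n$ with a single vertex $v$ (i.e., $v$ adjacent to every vertex of $C_n$). $d$ is the shortest-path distance and $d_k(x,y)=\min\{d(x,y),k+1\}$. A set $S$ is a distance-$k$ resolving set if for all distinct $x,y$ some $z\in S$ has $d_k(x,z)\ne d_k(y,z)$, and a resolving set if this holds with $d$. In the Maker-Breaker distance-$k$ resolving game, Maker and Breaker alternately select a not-yet-chosen vertex; Maker wins if his selected vertices form a distance-$k$ resolving set, Breaker wins otherwise. $O_{R,k}(G)=\mathcal{M}$ if Maker has a winning strategy whether he moves first or second, $\mathcal{B}$ if Breaker has a winning strategy whether she moves first or second, $\mathcal{N}$ if the first player has a winning strategy. $O_R(G)$ is the analogous outcome for the game in which Maker must form a resolving set. *)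

theory Defs
  imports Main
begin

fun reach :: "('a \<Rightarrow> 'a \<Rightarrow> bool) \<Rightarrow> nat \<Rightarrow> 'a \<Rightarrow> 'a \<Rightarrow> bool" where
  "reach adj 0 x y = (x = y)"
| "reach adj (Suc m) x y = (\<exists>z. adj x z \<and> reach adj m z y)"

text \<open>Shortest-path distance (the graphs used below are connected).\<close>
definition gdist :: "('a \<Rightarrow> 'a \<Rightarrow> bool) \<Rightarrow> 'a \<Rightarrow> 'a \<Rightarrow> nat" where
  "gdist adj x y = (LEAST m. reach adj m x y)"

definition gdist_k :: "nat \<Rightarrow> ('a \<Rightarrow> 'a \<Rightarrow> bool) \<Rightarrow> 'a \<Rightarrow> 'a \<Rightarrow> nat" where
  "gdist_k k adj x y = min (gdist adj x y) (k + 1)"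

definition resolving :: "('a \<Rightarrow> 'a \<Rightarrow> bool) \<Rightarrow> 'a set \<Rightarrow> 'a set \<Rightarrow> bool" where
  "resolving adj V S \<longleftrightarrow>
     (\<forall>x\<in>V. \<forall>y\<in>V. x \<noteq> y \<longrightarrow> (\<exists>z\<in>S. gdist adj x z \<noteq> gdist adj y z))"

definition k_resolving :: "nat \<Rightarrow> ('a \<Rightarrow> 'a \<Rightarrow> bool) \<Rightarrow> 'a set \<Rightarrow> 'a set \<Rightarrow> bool" where
  "k_resolving k adj V S \<longleftrightarrow>
     (\<forall>x\<in>V. \<forall>y\<in>V. x \<noteq> y \<longrightarrow> (\<exists>z\<in>S. gdist_k k adj x z \<noteq> gdist_k k adj y z))"

text \<open>Vertices 0..n-1 form the cycle C_n (i adjacent to i+1 mod n), vertex n is the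
universal vertex v.\<close>
definition wheel_V :: "nat \<Rightarrow> nat set" where
  "wheel_V n = {0..n}"

definition wheel_adj :: "nat \<Rightarrow> nat \<Rightarrow> nat \<Rightarrow> bool" where
  "wheel_adj n x y \<longleftrightarrow> x \<le> n \<and> y \<le> n \<and> x \<noteq> y \<and>
     (x = n \<or> y = n \<or> (x + 1) mod n = y \<or> (y + 1) mod n = x)"

text \<open>maker_wins V W M B t: from the position where Maker holds M, Breaker holds B,
and it is Maker's turn iff t, Maker has a winning strategy.\<close>
inductive maker_wins :: "'a set \<Rightarrow> ('a set \<Rightarrow> bool) \<Rightarrow> 'a set \<Rightarrow> 'a set \<Rightarrow> bool \<Rightarrow> bool"
  for V W where
  finish: "M \<union> B = V \<Longrightarrow> W M \<Longrightarrow> maker_wins V W M B t"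
| maker_move: "v \<in> V - (M \<union> B) \<Longrightarrow> maker_wins V W (insert v M) B False
      \<Longrightarrow> maker_wins V W M B True"
| breaker_move: "M \<union> B \<noteq> V \<Longrightarrow> (\<forall>v \<in> V - (M \<union> B). maker_wins V W M (insert v B) True)
      \<Longrightarrow> maker_wins V W M B False"

datatype outcome = Maker_outcome | Breaker_outcome | Next_outcome | Previous_outcome

text \<open>Outcome: M if Maker wins both as first and second player; B if Breaker wins
both (i.e. Maker wins in neither, the game being finite and determined); N if the
first player wins; P (second player wins) for completeness.\<close>
definition game_outcome :: "'a set \<Rightarrow> ('a set \<Rightarrow> bool) \<Rightarrow> outcome" where
  "game_outcome V W =
    (let mf = maker_wins V W {} {} True; ms = maker_wins V W {} {} False in
     if mf \<and> ms then Maker_outcome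
     else if \<not> mf \<and> \<not> ms then Breaker_outcome
     else if mf \<and> \<not> ms then Next_outcome
     else Previous_outcome)"

definition O_R :: "('a \<Rightarrow> 'a \<Rightarrow> bool) \<Rightarrow> 'a set \<Rightarrow> outcome" where
  "O_R adj V = game_outcome V (resolving adj V)"

definition O_Rk :: "nat \<Rightarrow> ('a \<Rightarrow> 'a \<Rightarrow> bool) \<Rightarrow> 'a set \<Rightarrow> outcome" where
  "O_Rk k adj V = game_outcome V (k_resolving k adj V)"

end

theory Submission
  imports Defs
begin

text \<open>
  In the wheel any two vertices are at distance at most 2, so for k \<ge> 1 distance-k resolving
  sets are just resolving sets, and S resolves iff no two vertices have the same 0/1/2-distances
  to all of S.  For n \<ge> 6 every S containing a vertex of each rim pair {2i, 2i+1} (and the last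
  rim vertex when n is odd) resolves: two rim vertices outside S are told apart by one of their
  partners, since otherwise the rim would contain a 4-cycle, and the centre is told apart from a
  rim vertex y by one of three vertices of S, as y has only two rim neighbours.  Maker forces such
  a set by the pairing strategy, moving first when n is odd to take the unpaired vertex; for
  n = 4, 5, 7 explicit pairings (for n = 7 after a reply to Breaker's first move) are checked by
  evaluation.  For n = 3 the wheel is K4, whose resolving sets miss at most one vertex, while
  Maker gets only two of the four vertices.  An extra vertex never hurts Maker, so winning as
  second player implies winning as first player.
\<close>

section \<open>Maker-Breaker games\<close>

definition up_closed_in :: "'a set \<Rightarrow> ('a set \<Rightarrow> bool) \<Rightarrow> bool" where
  "up_closed_in V W \<longleftrightarrow> (\<forall>S S'. W S \<longrightarrow> S \<subseteq> S' \<longrightarrow> S' \<subseteq> V \<longrightarrow> W S')"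

lemma up_closed_inD: "up_closed_in V W \<Longrightarrow> W S \<Longrightarrow> S \<subseteq> S' \<Longrightarrow> S' \<subseteq> V \<Longrightarrow> W S'"
  unfolding up_closed_in_def by blast

lemma maker_wins_full_iff:
  assumes "M \<union> B = V"
  shows "maker_wins V W M B t \<longleftrightarrow> W M"
proof
  assume "maker_wins V W M B t"
  then show "W M" using assms by cases auto
qed (use assms maker_wins.finish in blast)

lemma maker_wins_weaken:
  assumes "maker_wins V W M B t" and "\<And>S. S \<subseteq> V \<Longrightarrow> W S \<Longrightarrow> W' S"
  shows "maker_wins V W' M B t"
  using assms(1)
proof (induction rule: maker_wins.induct)
  case (finish M B t)
  then show ?case using assms(2) by (intro maker_wins.finish) auto
next
  case (maker_move v M B)
  then show ?case by (intro maker_wins.maker_move[of v]) auto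
next
  case (breaker_move M B)
  then show ?case by (intro maker_wins.breaker_move) auto
qed

lemma game_outcome_cong:
  assumes "\<And>S. S \<subseteq> V \<Longrightarrow> W S \<longleftrightarrow> W' S"
  shows "game_outcome V W = game_outcome V W'"
proof -
  have "maker_wins V W M B t \<longleftrightarrow> maker_wins V W' M B t" for M B t
    using maker_wins_weaken[of V W M B t W'] maker_wins_weaken[of V W' M B t W] assms
    by blast
  then show ?thesis unfolding game_outcome_def by simp
qed

lemma maker_wins_insert:
  assumes "maker_wins V W M B t" and "M \<union> B \<subseteq> V" and "v \<in> V - B" and "up_closed_in V W"
  shows "maker_wins V W (insert v M) B t"
  using assms(1-3)
proof (induction arbitrary: v rule: maker_wins.induct)
  case (finish M B t)
  then have "insert v M = M" by blast
  then show ?case using finish.hyps by (simp add: maker_wins.finish)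
next
  case (maker_move u M B)
  show ?case
  proof (cases "u = v")
    case True
    show ?thesis
    proof (cases "insert v M \<union> B = V")
      case full: True
      then show ?thesis
        using maker_move.hyps(2) \<open>u = v\<close> by (simp add: maker_wins_full_iff)
    next
      case False
      then obtain w where w: "w \<in> V - (insert v M \<union> B)"
        using maker_move.prems by auto
      then have "maker_wins V W (insert w (insert v M)) B False"
        using maker_move.IH[of w] maker_move.prems \<open>u = v\<close> by blast
      then show ?thesis using w by (intro maker_wins.maker_move[of w]) auto
    qed
  next
    case False
    have "maker_wins V W (insert v (insert u M)) B False"
      using maker_move.IH[of v] maker_move.hyps(1) maker_move.prems by blast
    then have "maker_wins V W (insert u (insert v M)) B False"
      by (simp add: insert_commute)
    then show ?thesis using maker_move.hyps(1) False by (intro maker_wins.maker_move[of u]) auto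
  qed
next
  case (breaker_move M B)
  have win: "maker_wins V W M (insert w B) True" if "w \<in> V - (M \<union> B)" for w
    using breaker_move.IH that by blast
  have IH: "maker_wins V W (insert v' M) (insert w B) True"
    if "w \<in> V - (M \<union> B)" "v' \<in> V - insert w B" for w v'
    using breaker_move.IH breaker_move.prems(1) that by blast
  show ?case
  proof (cases "v \<in> M")
    case True
    then have "insert v M = M" by blast
    then show ?thesis using breaker_move.hyps(1) win by (simp add: maker_wins.breaker_move)
  next
    case v_free: False
    show ?thesis
    proof (cases "insert v M \<union> B = V")
      case full: True
      have "maker_wins V W M (insert v B) True"
        using win breaker_move.prems(2) v_free by blast
      then have "W M" using full by (simp add: maker_wins_full_iff)
      then have "W (insert v M)"
        using assms(4) full unfolding up_closed_in_def by blast
      then show ?thesis using full by (simp add: maker_wins_full_iff)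
    next
      case False
      show ?thesis
      proof (rule maker_wins.breaker_move[OF False], intro ballI)
        fix w assume "w \<in> V - (insert v M \<union> B)"
        then show "maker_wins V W (insert v M) (insert w B) True"
          using IH breaker_move.prems(2) by blast
      qed
    qed
  qed
qed

lemma maker_wins_first_if_second:
  assumes "maker_wins V W M B False" and "M \<union> B \<subseteq> V" and "up_closed_in V W"
  shows "maker_wins V W M B True"
proof (cases "M \<union> B = V")
  case True
  then show ?thesis using assms(1) by (simp add: maker_wins_full_iff)
next
  case False
  then obtain v where v: "v \<in> V - (M \<union> B)" using assms(2) by auto
  then have "maker_wins V W (insert v M) B False"
    using maker_wins_insert[OF assms(1,2) _ assms(3)] by blast
  then show ?thesis using v by (rule maker_wins.maker_move[rotated])
qed

lemma game_outcome_Maker_if_second_player_wins: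
  assumes "up_closed_in V W" and "maker_wins V W {} {} False"
  shows "game_outcome V W = Maker_outcome"
  using maker_wins_first_if_second[OF assms(2) _ assms(1)] assms(2)
  unfolding game_outcome_def by simp

lemma game_outcome_Breaker_if_first_player_loses:
  assumes "up_closed_in V W" and "\<not> maker_wins V W {} {} True"
  shows "game_outcome V W = Breaker_outcome"
  using maker_wins_first_if_second[of V W "{}" "{}"] assms unfolding game_outcome_def Let_def
  by auto

lemma game_outcome_if_first_player_wins:
  "maker_wins V W {} {} True \<Longrightarrow> game_outcome V W \<in> {Maker_outcome, Next_outcome}"
  unfolding game_outcome_def by (simp add: Let_def)

lemma maker_wins_small_winning_set:
  assumes "maker_wins V W M B t" and "finite V" and "M \<union> B \<subseteq> V"
  shows "\<exists>M'. W M' \<and> M \<subseteq> M' \<and> M' \<subseteq> V \<and>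
           card M' \<le> card M + (card (V - (M \<union> B)) + of_bool t) div 2"
  using assms(1,3)
proof (induction rule: maker_wins.induct)
  case (finish M B t)
  then show ?case by auto
next
  case (maker_move v M B)
  define f where "f = card (V - (M \<union> B))"
  have f: "card (V - (insert v M \<union> B)) = f - 1" "f > 0"
    using maker_move.hyps(1) assms(2) unfolding f_def by (auto simp: card_gt_0_iff)
  have "finite M" using maker_move.prems assms(2) finite_subset by blast
  then have "card (insert v M) = Suc (card M)" using maker_move.hyps(1) by simp
  moreover obtain M' where M': "W M'" "insert v M \<subseteq> M'" "M' \<subseteq> V"
    "card M' \<le> card (insert v M) + (f - 1) div 2"
    using maker_move.IH maker_move.prems maker_move.hyps(1) f(1) by auto
  moreover have "(f + 1) div 2 = Suc ((f - 1) div 2)" using f(2) by (cases f) auto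
  ultimately show ?case unfolding f_def by (intro exI[of _ M']) auto
next
  case (breaker_move M B)
  define f where "f = card (V - (M \<union> B))"
  obtain v where v: "v \<in> V - (M \<union> B)"
    using breaker_move.hyps(1) breaker_move.prems by blast
  then have f: "card (V - (M \<union> insert v B)) = f - 1" "f > 0"
    using assms(2) unfolding f_def by (auto simp: card_gt_0_iff)
  have "M \<union> insert v B \<subseteq> V" using v breaker_move.prems by blast
  then have "\<exists>M'. W M' \<and> M \<subseteq> M' \<and> M' \<subseteq> V \<and>
      card M' \<le> card M + (card (V - (M \<union> insert v B)) + of_bool True) div 2"
    using breaker_move.IH v by blast
  then obtain M' where M': "W M'" "M \<subseteq> M'" "M' \<subseteq> V"
    "card M' \<le> card M + (f - 1 + 1) div 2"
    using f(1) by auto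
  then show ?case using f(2) unfolding f_def by (intro exI[of _ M']) auto
qed

definition pairing_invariant :: "'a set \<Rightarrow> 'a set \<Rightarrow> ('a \<Rightarrow> 'a) \<Rightarrow> 'a set \<Rightarrow> 'a set \<Rightarrow> bool" where
  "pairing_invariant V D p M B \<longleftrightarrow> M \<union> B \<subseteq> V \<and> (\<forall>x\<in>D. x \<in> B \<longrightarrow> p x \<in> M)"

lemma pairing_invariant_full:
  assumes "pairing_invariant V D p M B" and "M \<union> B = V" and "D \<subseteq> V"
  shows "\<forall>x\<in>D. x \<in> M \<or> p x \<in> M"
  using assms unfolding pairing_invariant_def by blast

lemma pairing_invariant_reply:
  assumes inv: "pairing_invariant V D p M B" and v: "v \<in> V - (M \<union> B)" and "D \<subseteq> V"
    and partner: "\<And>x. x \<in> D \<Longrightarrow> p x \<in> D \<and> p x \<noteq> x \<and> p (p x) = x"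
  shows "(M \<union> insert v B = V \<and> pairing_invariant V D p M (insert v B)) \<or>
    (\<exists>u\<in>V - (M \<union> insert v B). pairing_invariant V D p (insert u M) (insert v B))"
proof (cases "v \<in> D \<and> p v \<notin> M")
  case True
  have "p v \<in> D" "p v \<noteq> v" "p (p v) = v" using partner True by blast+
  moreover from this have "p v \<notin> B" using v inv unfolding pairing_invariant_def by force
  ultimately have "p v \<in> V - (M \<union> insert v B)
      \<and> pairing_invariant V D p (insert (p v) M) (insert v B)"
    using True v inv assms(3) unfolding pairing_invariant_def by auto
  then show ?thesis by blast
next
  case False
  then have "pairing_invariant V D p M (insert v B)"
    using v inv unfolding pairing_invariant_def by auto
  moreover have "pairing_invariant V D p (insert u M) (insert v B)" if "u \<in> V" for u
    using calculation that unfolding pairing_invariant_def by auto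
  moreover have "M \<union> insert v B = V \<or> (\<exists>u. u \<in> V - (M \<union> insert v B))"
    using calculation(1) unfolding pairing_invariant_def by blast
  ultimately show ?thesis by blast
qed

text \<open>The pairing strategy: whenever Breaker takes a vertex of a pair, Maker takes its partner.\<close>

lemma maker_wins_by_pairing:
  assumes "finite V" and "D \<subseteq> V"
    and partner: "\<And>x. x \<in> D \<Longrightarrow> p x \<in> D \<and> p x \<noteq> x \<and> p (p x) = x"
    and win: "\<And>M'. M \<subseteq> M' \<Longrightarrow> M' \<subseteq> V \<Longrightarrow> \<forall>x\<in>D. x \<in> M' \<or> p x \<in> M' \<Longrightarrow> W M'"
    and "pairing_invariant V D p M B"
  shows "maker_wins V W M B False"
proof -
  have full_win: "maker_wins V W M' B' t"
    if "M \<subseteq> M'" "M' \<union> B' = V" "pairing_invariant V D p M' B'" for M' B' t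
  proof -
    have "W M'" using that win pairing_invariant_full[OF that(3,2) assms(2)] by blast
    then show ?thesis using that(2) by (simp add: maker_wins_full_iff)
  qed
  have "maker_wins V W M' B' False" if "M \<subseteq> M'" "pairing_invariant V D p M' B'" for M' B'
    using that
  proof (induction "card (V - (M' \<union> B'))" arbitrary: M' B' rule: less_induct)
    case less
    show ?case
    proof (cases "M' \<union> B' = V")
      case True
      then show ?thesis using less.prems full_win by blast
    next
      case not_full: False
      show ?thesis
      proof (rule maker_wins.breaker_move[OF not_full], intro ballI)
        fix v assume v: "v \<in> V - (M' \<union> B')"
        have "(M' \<union> insert v B' = V \<and> pairing_invariant V D p M' (insert v B')) \<or>
          (\<exists>u\<in>V - (M' \<union> insert v B'). pairing_invariant V D p (insert u M') (insert v B'))"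
          using pairing_invariant_reply[OF less.prems(2) v assms(2)] partner by blast
        then show "maker_wins V W M' (insert v B') True"
        proof (elim disjE conjE bexE)
          assume "M' \<union> insert v B' = V" "pairing_invariant V D p M' (insert v B')"
          then show ?thesis using less.prems(1) full_win by blast
        next
          fix u assume u: "u \<in> V - (M' \<union> insert v B')"
            and inv: "pairing_invariant V D p (insert u M') (insert v B')"
          have "V - (insert u M' \<union> insert v B') \<subset> V - (M' \<union> B')" using u v by auto
          then have "card (V - (insert u M' \<union> insert v B')) < card (V - (M' \<union> B'))"
            using assms(1) by (simp add: psubset_card_mono)
          then have "maker_wins V W (insert u M') (insert v B') False"
            by (rule less.hyps) (use less.prems inv in auto)
          then show ?thesis using u by (rule maker_wins.maker_move[rotated])
        qed
      qed
    qed
  qed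
  then show ?thesis using assms(5) by blast
qed

fun flat_pairs :: "('a \<times> 'a) list \<Rightarrow> 'a list" where
  "flat_pairs [] = []"
| "flat_pairs ((a, b) # ps) = a # b # flat_pairs ps"

fun list_partner :: "('a \<times> 'a) list \<Rightarrow> 'a \<Rightarrow> 'a" where
  "list_partner [] x = x"
| "list_partner ((a, b) # ps) x = (if x = a then b else if x = b then a else list_partner ps x)"

fun transversals :: "('a \<times> 'a) list \<Rightarrow> 'a list list" where
  "transversals [] = [[]]"
| "transversals ((a, b) # ps) = map ((#) a) (transversals ps) @ map ((#) b) (transversals ps)"

lemma set_flat_pairs: "set (flat_pairs ps) = fst ` set ps \<union> snd ` set ps"
  by (induction ps rule: flat_pairs.induct) auto

lemma list_partner_involution:
  assumes "distinct (flat_pairs ps)" and "x \<in> set (flat_pairs ps)"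
  shows "list_partner ps x \<in> set (flat_pairs ps) \<and> list_partner ps x \<noteq> x
         \<and> list_partner ps (list_partner ps x) = x"
  using assms by (induction ps rule: flat_pairs.induct) auto

lemma list_partner_pair:
  assumes "distinct (flat_pairs ps)" and "(a, b) \<in> set ps"
  shows "list_partner ps a = b"
  using assms
proof (induction ps rule: flat_pairs.induct)
  case (2 c d ps)
  have "a \<in> set (flat_pairs ps)" if "(a, b) \<in> set ps"
    using that by (force simp: set_flat_pairs)
  then show ?case using "2" by auto
qed simp

lemma transversal_subset:
  assumes "\<forall>(a, b)\<in>set ps. a \<in> S \<or> b \<in> S"
  shows "\<exists>C\<in>set (transversals ps). set C \<subseteq> S"
  using assms
proof (induction ps rule: flat_pairs.induct)
  case 1
  then show ?case by simp
next
  case (2 a b ps)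
  then obtain C where C: "C \<in> set (transversals ps)" "set C \<subseteq> S" by auto
  have "a \<in> S \<or> b \<in> S" using "2.prems" by auto
  then show ?case
  proof
    assume "a \<in> S"
    then show ?thesis using C by (intro bexI[of _ "a # C"]) auto
  next
    assume "b \<in> S"
    then show ?thesis using C by (intro bexI[of _ "b # C"]) auto
  qed
qed

lemma maker_wins_by_pair_list:
  assumes "finite V" and "up_closed_in V W" and "M \<union> B \<subseteq> V"
    and "set (flat_pairs ps) \<subseteq> V - B" and "distinct (flat_pairs ps)"
    and "\<forall>C\<in>set (transversals ps). W (M \<union> set C)"
  shows "maker_wins V W M B False"
proof (rule maker_wins_by_pairing[where D = "set (flat_pairs ps)" and p = "list_partner ps"])
  fix M' assume M': "M \<subseteq> M'" "M' \<subseteq> V"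
    and hit: "\<forall>x\<in>set (flat_pairs ps). x \<in> M' \<or> list_partner ps x \<in> M'"
  have "a \<in> M' \<or> b \<in> M'" if ab: "(a, b) \<in> set ps" for a b
  proof -
    have "a \<in> set (flat_pairs ps)" using ab by (force simp: set_flat_pairs)
    then show ?thesis using hit list_partner_pair[OF assms(5) ab] by blast
  qed
  then have "\<forall>(a, b)\<in>set ps. a \<in> M' \<or> b \<in> M'" by auto
  from transversal_subset[OF this]
  obtain C where C: "C \<in> set (transversals ps)" "set C \<subseteq> M'" by blast
  have "W (M \<union> set C)" using assms(6) C(1) by blast
  moreover have "M \<union> set C \<subseteq> M'" using M'(1) C(2) by blast
  ultimately show "W M'" using up_closed_inD[OF assms(2)] M'(2) by blast
next
  show "\<And>x. x \<in> set (flat_pairs ps) \<Longrightarrow> list_partner ps x \<in> set (flat_pairs ps) \<and>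
      list_partner ps x \<noteq> x \<and> list_partner ps (list_partner ps x) = x"
    using list_partner_involution[OF assms(5)] by blast
next
  show "set (flat_pairs ps) \<subseteq> V" "pairing_invariant V (set (flat_pairs ps)) (list_partner ps) M B"
    using assms(3,4) unfolding pairing_invariant_def by blast+
qed (use assms in blast)

section \<open>Resolving sets of the wheel\<close>

lemma gdist_eqI:
  assumes "reach adj m x y" and "\<And>m'. m' < m \<Longrightarrow> \<not> reach adj m' x y"
  shows "gdist adj x y = m"
  unfolding gdist_def using assms by (metis (mono_tags) Least_equality not_le)

definition wheel_dist :: "nat \<Rightarrow> nat \<Rightarrow> nat \<Rightarrow> nat" where
  "wheel_dist n x y = (if x = y then 0 else if wheel_adj n x y then 1 else 2)"

lemma gdist_wheel:
  assumes "x \<le> n" and "y \<le> n"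
  shows "gdist (wheel_adj n) x y = wheel_dist n x y"
proof (rule gdist_eqI)
  have "reach (wheel_adj n) 2 x y" if "x \<noteq> y" "\<not> wheel_adj n x y"
  proof -
    have "x \<noteq> n" "y \<noteq> n" using that assms unfolding wheel_adj_def by auto
    then have "wheel_adj n x n \<and> wheel_adj n n y" using assms unfolding wheel_adj_def by auto
    then show ?thesis by (auto simp: numeral_2_eq_2)
  qed
  then show "reach (wheel_adj n) (wheel_dist n x y) x y"
    unfolding wheel_dist_def by auto
  show "\<not> reach (wheel_adj n) m x y" if "m < wheel_dist n x y" for m
    using that unfolding wheel_dist_def by (auto simp: less_2_cases_iff split: if_splits)
qed

lemma gdist_k_wheel:
  assumes "k \<ge> 1" and "x \<le> n" and "y \<le> n"
  shows "gdist_k k (wheel_adj n) x y = wheel_dist n x y"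
  using assms gdist_wheel unfolding gdist_k_def wheel_dist_def by auto

definition wheel_resolves :: "nat \<Rightarrow> nat set \<Rightarrow> bool" where
  "wheel_resolves n S \<longleftrightarrow>
     (\<forall>x\<le>n. \<forall>y\<le>n. x \<noteq> y \<longrightarrow> (\<exists>z\<in>S. wheel_dist n x z \<noteq> wheel_dist n y z))"

lemma resolving_wheel_iff:
  assumes "S \<subseteq> wheel_V n"
  shows "resolving (wheel_adj n) (wheel_V n) S \<longleftrightarrow> wheel_resolves n S"
proof -
  have "gdist (wheel_adj n) x z = wheel_dist n x z" if "x \<le> n" "z \<in> S" for x z
    using that assms gdist_wheel unfolding wheel_V_def by auto
  then show ?thesis unfolding resolving_def wheel_resolves_def wheel_V_def by auto
qed

lemma k_resolving_wheel_iff: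
  assumes "k \<ge> 1" and "S \<subseteq> wheel_V n"
  shows "k_resolving k (wheel_adj n) (wheel_V n) S \<longleftrightarrow> wheel_resolves n S"
proof -
  have "gdist_k k (wheel_adj n) x z = wheel_dist n x z" if "x \<le> n" "z \<in> S" for x z
    using that assms gdist_k_wheel unfolding wheel_V_def by auto
  then show ?thesis unfolding k_resolving_def wheel_resolves_def wheel_V_def by auto
qed

lemma O_R_wheel: "O_R (wheel_adj n) (wheel_V n) = game_outcome (wheel_V n) (wheel_resolves n)"
  unfolding O_R_def by (rule game_outcome_cong) (rule resolving_wheel_iff)

lemma O_Rk_wheel:
  "k \<ge> 1 \<Longrightarrow> O_Rk k (wheel_adj n) (wheel_V n) = game_outcome (wheel_V n) (wheel_resolves n)"
  unfolding O_Rk_def by (rule game_outcome_cong) (rule k_resolving_wheel_iff)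

lemma up_closed_wheel_resolves: "up_closed_in V (wheel_resolves n)"
  unfolding up_closed_in_def wheel_resolves_def by blast

lemma wheel_adj_rim_iff:
  assumes "a < n" and "b < n"
  shows "wheel_adj n a b \<longleftrightarrow>
    a \<noteq> b \<and> (b = a + 1 \<or> a = b + 1 \<or> (a + 1 = n \<and> b = 0) \<or> (b + 1 = n \<and> a = 0))"
proof -
  have "(x + 1) mod n = (if x + 1 = n then 0 else x + 1)" if "x < n" for x
    using that by auto
  then show ?thesis using assms unfolding wheel_adj_def by auto
qed

lemma wheel_adj_centre: "a < n \<Longrightarrow> wheel_adj n a n \<and> wheel_adj n n a"
  unfolding wheel_adj_def by auto

lemma rim_adj_at_most_two:
  assumes "y < n" "a < n" "b < n" "c < n" and "distinct [a, b, c]"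
  shows "\<not> (wheel_adj n y a \<and> wheel_adj n y b \<and> wheel_adj n y c)"
  using assms by (simp add: wheel_adj_rim_iff) arith

definition rim_partner :: "nat \<Rightarrow> nat" where
  "rim_partner x = (if even x then x + 1 else x - 1)"

lemma rim_partner_involution: "rim_partner (rim_partner x) = x" "rim_partner x \<noteq> x"
  unfolding rim_partner_def by (auto dest: odd_pos)

lemma rim_partner_less: "even m \<Longrightarrow> x < m \<Longrightarrow> rim_partner x < m"
  unfolding rim_partner_def by (auto intro!: Suc_lessI)

lemma wheel_adj_rim_partner: "x < n \<Longrightarrow> rim_partner x < n \<Longrightarrow> wheel_adj n x (rim_partner x)"
  unfolding rim_partner_def by (auto simp: wheel_adj_rim_iff dest: odd_pos)

lemma rim_partners_no_four_cycle:
  assumes "n \<ge> 5" "x < n" "y < n" "rim_partner x < n" "rim_partner y < n"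
    and "x \<noteq> y" "rim_partner x \<noteq> y"
  shows "\<not> (wheel_adj n y (rim_partner x) \<and> wheel_adj n x (rim_partner y))"
proof -
  have px: "rim_partner x = x + 1 \<or> (x \<ge> 1 \<and> rim_partner x = x - 1)"
    unfolding rim_partner_def by (auto dest: odd_pos)
  have py: "rim_partner y = y + 1 \<or> (y \<ge> 1 \<and> rim_partner y = y - 1)"
    unfolding rim_partner_def by (auto dest: odd_pos)
  have "rim_partner x \<noteq> rim_partner y" using assms(6) rim_partner_involution(1) by metis
  moreover have "rim_partner y \<noteq> x" using assms(7) rim_partner_involution(1) by metis
  ultimately show ?thesis using assms px py by (simp add: wheel_adj_rim_iff) arith
qed

lemma centre_separated:
  assumes "n \<ge> 6" and hit: "\<forall>x<n. x \<in> S \<or> (rim_partner x < n \<and> rim_partner x \<in> S)"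
    and "y < n" and "y \<notin> S"
  shows "\<exists>z\<in>S. wheel_dist n n z \<noteq> wheel_dist n y z"
proof -
  have pair_hit: "\<exists>r\<in>S. 2 * i \<le> r \<and> r \<le> 2 * i + 1" if "i < 3" for i
  proof -
    have "2 * i < n" "rim_partner (2 * i) = 2 * i + 1"
      using that assms(1) unfolding rim_partner_def by auto
    then have "2 * i \<in> S \<or> 2 * i + 1 \<in> S" using hit by metis
    then show ?thesis by (metis le_add1 order_refl)
  qed
  obtain r0 where r0: "r0 \<in> S" "r0 \<le> 1" using pair_hit[of 0] by auto
  obtain r1 where r1: "r1 \<in> S" "2 \<le> r1" "r1 \<le> 3" using pair_hit[of 1] by auto
  obtain r2 where r2: "r2 \<in> S" "4 \<le> r2" "r2 \<le> 5" using pair_hit[of 2] by auto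
  have "\<not> (wheel_adj n y r0 \<and> wheel_adj n y r1 \<and> wheel_adj n y r2)"
    using rim_adj_at_most_two[of y n r0 r1 r2] assms(1,3) r0 r1 r2 by simp
  moreover have "r0 < n" "r1 < n" "r2 < n" using r0 r1 r2 assms(1) by auto
  ultimately obtain r where r: "r \<in> S" "r < n" "\<not> wheel_adj n y r"
    using r0(1) r1(1) r2(1) by blast
  have "r \<noteq> y" using r(1) assms(4) by blast
  then have "wheel_dist n y r = 2" "wheel_dist n n r = 1"
    using r wheel_adj_centre[of r n] unfolding wheel_dist_def by auto
  then show ?thesis using r(1) by force
qed

lemma rim_pair_separated:
  assumes "n \<ge> 5" and hit: "\<forall>x<n. x \<in> S \<or> (rim_partner x < n \<and> rim_partner x \<in> S)"
    and "x < n" "y < n" "x \<noteq> y" "x \<notin> S" "y \<notin> S"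
  shows "\<exists>z\<in>S. wheel_dist n x z \<noteq> wheel_dist n y z"
proof -
  have p: "rim_partner x < n" "rim_partner x \<in> S" "rim_partner y < n" "rim_partner y \<in> S"
    using hit assms(3-7) by auto
  then have ne: "rim_partner x \<noteq> y" "rim_partner y \<noteq> x" using assms(6,7) by auto
  have "x \<noteq> rim_partner x" "y \<noteq> rim_partner y" by (metis rim_partner_involution(2))+
  then have "wheel_dist n x (rim_partner x) = 1" "wheel_dist n y (rim_partner y) = 1"
    using wheel_adj_rim_partner[of x n] wheel_adj_rim_partner[of y n] p assms(3,4)
    unfolding wheel_dist_def by auto
  moreover have "\<not> (wheel_adj n y (rim_partner x) \<and> wheel_adj n x (rim_partner y))"
    using rim_partners_no_four_cycle assms(1,3-5) p ne(1) by blast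
  then have "wheel_dist n y (rim_partner x) = 2 \<or> wheel_dist n x (rim_partner y) = 2"
    using ne unfolding wheel_dist_def by auto
  ultimately show ?thesis using p(2,4) by force
qed

lemma wheel_resolves_if_partners_hit:
  assumes "n \<ge> 6" and hit: "\<forall>x<n. x \<in> S \<or> (rim_partner x < n \<and> rim_partner x \<in> S)"
  shows "wheel_resolves n S"
  unfolding wheel_resolves_def
proof (intro allI impI)
  fix x y assume xy: "x \<le> n" "y \<le> n" "x \<noteq> y"
  have in_S: "\<exists>z\<in>S. wheel_dist n a z \<noteq> wheel_dist n b z" if "a \<in> S \<or> b \<in> S" "a \<noteq> b" for a b
    using that unfolding wheel_dist_def by auto
  consider "x \<in> S \<or> y \<in> S" | "x \<notin> S" "y \<notin> S" "x = n" | "x \<notin> S" "y \<notin> S" "y = n"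
    | "x \<notin> S" "y \<notin> S" "x < n" "y < n"
    using xy by fastforce
  then show "\<exists>z\<in>S. wheel_dist n x z \<noteq> wheel_dist n y z"
  proof cases
    case 1
    then show ?thesis using in_S xy(3) by blast
  next
    case 2
    then show ?thesis using centre_separated[OF assms, of y] xy by auto
  next
    case 3
    then obtain z where "z \<in> S" "wheel_dist n n z \<noteq> wheel_dist n x z"
      using centre_separated[OF assms, of x] xy by auto
    then show ?thesis using \<open>y = n\<close> by (intro bexI[of _ z]) auto
  next
    case 4
    then show ?thesis using rim_pair_separated[of n S x y] assms xy by auto
  qed
qed

section \<open>Winning strategies on the wheel\<close>

lemma wheel_second_player_wins_even:
  assumes "n \<ge> 6" and "even n"
  shows "maker_wins (wheel_V n) (wheel_resolves n) {} {} False"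
proof (rule maker_wins_by_pairing[where D = "{0..<n}" and p = rim_partner])
  fix M' assume "{} \<subseteq> M'" "M' \<subseteq> wheel_V n" "\<forall>x\<in>{0..<n}. x \<in> M' \<or> rim_partner x \<in> M'"
  then show "wheel_resolves n M'"
    using wheel_resolves_if_partners_hit[OF assms(1)] rim_partner_less[OF assms(2)] by auto
qed (use rim_partner_less[OF assms(2)] rim_partner_involution
     in \<open>auto simp: wheel_V_def pairing_invariant_def\<close>)

lemma wheel_first_player_wins_odd:
  assumes "n \<ge> 7" and "odd n"
  shows "maker_wins (wheel_V n) (wheel_resolves n) {} {} True"
proof (rule maker_wins.maker_move[of "n - 1"])
  show "n - 1 \<in> wheel_V n - ({} \<union> {})" unfolding wheel_V_def by auto
  have even_last: "even (n - 1)" using assms(2) by simp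
  show "maker_wins (wheel_V n) (wheel_resolves n) (insert (n - 1) {}) {} False"
  proof (rule maker_wins_by_pairing[where D = "{0..<n - 1}" and p = rim_partner])
    fix M' assume M': "insert (n - 1) {} \<subseteq> M'" "M' \<subseteq> wheel_V n"
      "\<forall>x\<in>{0..<n - 1}. x \<in> M' \<or> rim_partner x \<in> M'"
    have "x \<in> M' \<or> (rim_partner x < n \<and> rim_partner x \<in> M')" if "x < n" for x
    proof (cases "x = n - 1")
      case False
      then have "x < n - 1" using that by auto
      then show ?thesis using M'(3) rim_partner_less[OF even_last] by fastforce
    qed (use M'(1) in auto)
    then show "wheel_resolves n M'" using wheel_resolves_if_partners_hit assms(1) by auto
  qed (use rim_partner_less[OF even_last] rim_partner_involution
       in \<open>auto simp: wheel_V_def pairing_invariant_def\<close>)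
qed

lemma wheel_V_upt: "wheel_V n = set [0..<Suc n]"
  unfolding wheel_V_def by auto

text \<open>\<open>code_simp\<close> evaluates quantifiers over \<open>set [0..<Suc n]\<close> quickly but those over
  \<open>{..n}\<close> very slowly, hence these list forms.\<close>

lemma wheel_resolves_upt:
  "wheel_resolves n S \<longleftrightarrow>
     (\<forall>x\<in>set [0..<Suc n]. \<forall>y\<in>set [0..<Suc n]. x \<noteq> y \<longrightarrow>
        (\<exists>z\<in>S. wheel_dist n x z \<noteq> wheel_dist n y z))"
  unfolding wheel_resolves_def Ball_def by (simp add: less_Suc_eq_le del: upt_Suc)

definition wheel_pairing_certificate ::
    "nat \<Rightarrow> nat set \<Rightarrow> nat set \<Rightarrow> (nat \<times> nat) list \<Rightarrow> bool" where
  "wheel_pairing_certificate n M B ps \<longleftrightarrow>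
     M \<union> B \<subseteq> wheel_V n \<and> set (flat_pairs ps) \<subseteq> wheel_V n - B \<and> distinct (flat_pairs ps) \<and>
     (\<forall>C\<in>set (transversals ps). wheel_resolves n (M \<union> set C))"

lemma maker_wins_wheel_by_certificate:
  assumes "wheel_pairing_certificate n M B ps"
  shows "maker_wins (wheel_V n) (wheel_resolves n) M B False"
proof (rule maker_wins_by_pair_list)
  show "finite (wheel_V n)" by (simp add: wheel_V_def)
qed (use assms up_closed_wheel_resolves in \<open>auto simp: wheel_pairing_certificate_def\<close>)

lemma wheel4_second_player_wins: "maker_wins (wheel_V 4) (wheel_resolves 4) {} {} False"
proof (rule maker_wins_wheel_by_certificate)
  show "wheel_pairing_certificate 4 {} {} [(0, 2), (1, 3)]"
    unfolding wheel_pairing_certificate_def wheel_V_upt wheel_resolves_upt by code_simp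
qed

lemma wheel5_second_player_wins: "maker_wins (wheel_V 5) (wheel_resolves 5) {} {} False"
proof (rule maker_wins_wheel_by_certificate)
  show "wheel_pairing_certificate 5 {} {} [(0, 1), (2, 3), (4, 5)]"
    unfolding wheel_pairing_certificate_def wheel_V_upt wheel_resolves_upt by code_simp
qed

text \<open>Maker's second-player strategy on C7 + K1: answer Breaker's first vertex \<open>v\<close> by
  \<open>wheel7_reply v\<close>, then play the pairing strategy on \<open>wheel7_pairs v\<close>.\<close>

definition wheel7_reply :: "nat \<Rightarrow> nat" where
  "wheel7_reply v = [1, 0, 1, 0, 0, 1, 0, 0] ! v"

definition wheel7_pairs :: "nat \<Rightarrow> (nat \<times> nat) list" where
  "wheel7_pairs v =
     [[(2, 3), (4, 6), (5, 7)], [(2, 4), (3, 7), (5, 6)], [(0, 6), (3, 5), (4, 7)],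
      [(1, 7), (2, 4), (5, 6)], [(1, 2), (3, 5), (6, 7)], [(0, 7), (2, 3), (4, 6)],
      [(1, 2), (3, 5), (4, 7)], [(1, 2), (3, 4), (5, 6)]] ! v"

lemma wheel7_reply_certified:
  "\<forall>v\<in>set [0..<8]. wheel7_reply v \<noteq> v \<and>
     wheel_pairing_certificate 7 {wheel7_reply v} {v} (wheel7_pairs v)"
  unfolding wheel_pairing_certificate_def wheel_V_upt wheel_resolves_upt by code_simp

lemma wheel7_second_player_wins: "maker_wins (wheel_V 7) (wheel_resolves 7) {} {} False"
proof (rule maker_wins.breaker_move)
  show "{} \<union> {} \<noteq> wheel_V 7" unfolding wheel_V_def by auto
  show "\<forall>v\<in>wheel_V 7 - ({} \<union> {}). maker_wins (wheel_V 7) (wheel_resolves 7) {} (insert v {}) True"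
  proof
    fix v assume "v \<in> wheel_V 7 - ({} \<union> {})"
    then have "wheel7_reply v \<noteq> v"
      and cert: "wheel_pairing_certificate 7 {wheel7_reply v} {v} (wheel7_pairs v)"
      using wheel7_reply_certified unfolding wheel_V_def by auto
    then have "wheel7_reply v \<in> wheel_V 7 - ({} \<union> {v})"
      unfolding wheel_pairing_certificate_def by auto
    then show "maker_wins (wheel_V 7) (wheel_resolves 7) {} (insert v {}) True"
      using maker_wins_wheel_by_certificate[OF cert] by (intro maker_wins.maker_move) auto
  qed
qed

lemma wheel3_resolving_card:
  assumes "wheel_resolves 3 S" and "S \<subseteq> wheel_V 3"
  shows "3 \<le> card S"
proof -
  have adj: "wheel_dist 3 x z = 1" if "x \<le> 3" "z \<le> 3" "x \<noteq> z" for x z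
  proof -
    have "x \<in> {0, 1, 2, 3}" "z \<in> {0, 1, 2, 3}" using that by auto
    then show ?thesis using that unfolding wheel_dist_def wheel_adj_def by auto
  qed
  have "x = y" if "x \<in> wheel_V 3 - S" "y \<in> wheel_V 3 - S" for x y
  proof (rule ccontr)
    assume "x \<noteq> y"
    moreover have "wheel_dist 3 x z = wheel_dist 3 y z" if "z \<in> S" for z
      using adj that \<open>x \<in> wheel_V 3 - S\<close> \<open>y \<in> wheel_V 3 - S\<close> assms(2)
      unfolding wheel_V_def by (metis Diff_iff atLeastAtMost_iff subsetD)
    ultimately show False
      using assms(1) that unfolding wheel_resolves_def wheel_V_def by auto
  qed
  then have "card (wheel_V 3 - S) \<le> 1"
    by (simp add: card_le_Suc0_iff_eq wheel_V_def)
  moreover have "card (wheel_V 3 - S) = 4 - card S"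
    using assms(2) by (simp add: card_Diff_subset finite_subset wheel_V_def)
  ultimately show ?thesis by linarith
qed

lemma wheel3_first_player_loses: "\<not> maker_wins (wheel_V 3) (wheel_resolves 3) {} {} True"
proof
  assume "maker_wins (wheel_V 3) (wheel_resolves 3) {} {} True"
  from maker_wins_small_winning_set[OF this]
  obtain M' where "wheel_resolves 3 M'" "M' \<subseteq> wheel_V 3" "card M' \<le> (card (wheel_V 3) + 1) div 2"
    by (auto simp: wheel_V_def)
  moreover have "card (wheel_V 3) = 4" by (simp add: wheel_V_def)
  ultimately show False using wheel3_resolving_card by fastforce
qed

theorem corollary3p8:
  fixes k n :: nat
  assumes "k \<ge> 1" and "n \<ge> 3"
  shows "(n = 3 \<longrightarrow>
            O_Rk k (wheel_adj n) (wheel_V n) = Breaker_outcome \<and>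
            O_R (wheel_adj n) (wheel_V n) = Breaker_outcome)
       \<and> ((n \<in> {4,5,6,7} \<or> (n \<ge> 8 \<and> even n)) \<longrightarrow>
            O_Rk k (wheel_adj n) (wheel_V n) = Maker_outcome \<and>
            O_R (wheel_adj n) (wheel_V n) = Maker_outcome)
       \<and> ((n \<ge> 9 \<and> odd n) \<longrightarrow>
            O_Rk k (wheel_adj n) (wheel_V n) = O_R (wheel_adj n) (wheel_V n) \<and>
            O_R (wheel_adj n) (wheel_V n) \<in> {Maker_outcome, Next_outcome})"
proof -
  let ?outcome = "game_outcome (wheel_V n) (wheel_resolves n)"
  have up: "up_closed_in (wheel_V n) (wheel_resolves n)" by (rule up_closed_wheel_resolves)
  have "n = 3 \<longrightarrow> ?outcome = Breaker_outcome"
    using game_outcome_Breaker_if_first_player_loses[OF up] wheel3_first_player_loses by blast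
  moreover have "?outcome = Maker_outcome" if "n \<in> {4,5,6,7} \<or> (n \<ge> 8 \<and> even n)"
  proof (rule game_outcome_Maker_if_second_player_wins[OF up])
    show "maker_wins (wheel_V n) (wheel_resolves n) {} {} False"
      using that wheel4_second_player_wins wheel5_second_player_wins wheel7_second_player_wins
        wheel_second_player_wins_even[of n] by auto
  qed
  moreover have "?outcome \<in> {Maker_outcome, Next_outcome}" if "n \<ge> 9 \<and> odd n"
    using that wheel_first_player_wins_odd[of n] by (intro game_outcome_if_first_player_wins) auto
  ultimately show ?thesis using O_R_wheel O_Rk_wheel[OF assms(1)] by simp
qed

end
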